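(* If a nonempty set of candidates start the leader election algorithm, then the algorithm eventually terminates and exactly one candidate is known as the leader.
   Context: A broadcast network is modeled as a connected graph G(V,E) with n nodes; two nodes are joined by a (bidirectional) edge iff they hear each other's transmissions, and a transmitted message is heard by all neighbors of the sender. Messages arrive reliably, without errors, in FIFO order after arbitrary finite delay; there are no failures or topology changes; each node knows its number of neighbors. In the leader election algorithm the nodes are partitioned into fragments, each consisting of an active candidate node and its supporting nodes. Each fragment F has an identity id(F) = (id(F).size, id(F).identity) (its size and the candidate's identification number), ordered lexicographically: id(F1) > id(F2) iff id(F1).size > id(F2).size, or the sizes are equal and id(F1).identity > id(F2).identity. An edge is internal if it joins nodes of the same fragment and external otherwise; an external edge between F1 and F2 with id(F1) > id(F2) is directed from F1 to F2 (outgoing for F1, incoming for F2). Initially every node is a fragment of size 1 in state wait. The fragment-level (general) algorithm is: (1) a fragment enters (or stays in) state wait when it has at least one outgoing edge; (2) a fragment in wait moves to state work when all its external edges are incoming; in work it incurs a finite positive delay (workdelay) during which it counts its current number of nodes new_size and compares it to the size of its maximal neighbor fragment F': if new_size > X · id(F').size (X > 1 a parameter), it sets its size to new_size, all its external edges become outgoing, and it returns to wait; otherwise it ceases to exist and joins F' (its edges to F' become internal; F' keeps its size and identity); (3) a fragment with no external edges is in state leader. State transitions themselves take no time. *)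

theory Defs
  imports Complex_Main
begin

text \<open>Fragment-level model of the leader election algorithm on a broadcast
network G = (V, E).  A configuration records, for every node, the candidate
node of the fragment it belongs to (cand), and, for every candidate, the size
field of its fragment identity and the state of its fragment.  Each step of the asynchronous system is one
state transition of a single fragment; arbitrary interleavings model the
arbitrary finite delays (including workdelay).\<close>

datatype fstate = Wait | Work | Leader

record 'v config =
  cand :: "'v \<Rightarrow> 'v"
  fsize :: "'v \<Rightarrow> nat"
  stat :: "'v \<Rightarrow> fstate"

definition members :: "'v set \<Rightarrow> 'v config \<Rightarrow> 'v \<Rightarrow> 'v set" where
  "members V s c = {v \<in> V. cand s v = c}"

definition is_cand :: "'v set \<Rightarrow> 'v config \<Rightarrow> 'v \<Rightarrow> bool" where
  "is_cand V s c \<longleftrightarrow> c \<in> V \<and> cand s c = c"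

definition fid :: "('v \<Rightarrow> nat) \<Rightarrow> 'v config \<Rightarrow> 'v \<Rightarrow> nat \<times> nat" where
  "fid ident s c = (fsize s c, ident c)"

definition id_less :: "nat \<times> nat \<Rightarrow> nat \<times> nat \<Rightarrow> bool" where
  "id_less a b \<longleftrightarrow> fst a < fst b \<or> (fst a = fst b \<and> snd a < snd b)"

definition frag_adj :: "'v set \<Rightarrow> ('v \<Rightarrow> 'v \<Rightarrow> bool) \<Rightarrow> 'v config \<Rightarrow> 'v \<Rightarrow> 'v \<Rightarrow> bool" where
  "frag_adj V E s c d \<longleftrightarrow> c \<noteq> d \<and>
     (\<exists>u v. u \<in> V \<and> v \<in> V \<and> E u v \<and> cand s u = c \<and> cand s v = d)"

definition has_external :: "'v set \<Rightarrow> ('v \<Rightarrow> 'v \<Rightarrow> bool) \<Rightarrow> 'v config \<Rightarrow> 'v \<Rightarrow> bool" where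
  "has_external V E s c \<longleftrightarrow> (\<exists>d. frag_adj V E s c d)"

definition has_outgoing :: "'v set \<Rightarrow> ('v \<Rightarrow> 'v \<Rightarrow> bool) \<Rightarrow> ('v \<Rightarrow> nat) \<Rightarrow> 'v config \<Rightarrow> 'v \<Rightarrow> bool" where
  "has_outgoing V E ident s c \<longleftrightarrow>
     (\<exists>d. frag_adj V E s c d \<and> id_less (fid ident s d) (fid ident s c))"

definition all_incoming :: "'v set \<Rightarrow> ('v \<Rightarrow> 'v \<Rightarrow> bool) \<Rightarrow> ('v \<Rightarrow> nat) \<Rightarrow> 'v config \<Rightarrow> 'v \<Rightarrow> bool" where
  "all_incoming V E ident s c \<longleftrightarrow>
     (\<forall>d. frag_adj V E s c d \<longrightarrow> id_less (fid ident s c) (fid ident s d))"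

definition max_neighbor :: "'v set \<Rightarrow> ('v \<Rightarrow> 'v \<Rightarrow> bool) \<Rightarrow> ('v \<Rightarrow> nat) \<Rightarrow> 'v config \<Rightarrow> 'v \<Rightarrow> 'v \<Rightarrow> bool" where
  "max_neighbor V E ident s c d \<longleftrightarrow> frag_adj V E s c d \<and>
     (\<forall>d'. frag_adj V E s c d' \<longrightarrow> d' = d \<or> id_less (fid ident s d') (fid ident s d))"

inductive step :: "'v set \<Rightarrow> ('v \<Rightarrow> 'v \<Rightarrow> bool) \<Rightarrow> ('v \<Rightarrow> nat) \<Rightarrow> real \<Rightarrow>
    'v config \<Rightarrow> 'v config \<Rightarrow> bool"
  for V E ident X where
  to_work: "\<lbrakk> is_cand V s c; stat s c = Wait; has_external V E s c;
              all_incoming V E ident s c \<rbrakk>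
            \<Longrightarrow> step V E ident X s (s\<lparr>stat := (stat s)(c := Work)\<rparr>)"
| to_wait: "\<lbrakk> is_cand V s c; stat s c = Work; has_outgoing V E ident s c \<rbrakk>
            \<Longrightarrow> step V E ident X s (s\<lparr>stat := (stat s)(c := Wait)\<rparr>)"
| grow: "\<lbrakk> is_cand V s c; stat s c = Work; max_neighbor V E ident s c d;
           real (card (members V s c)) > X * real (fsize s d) \<rbrakk>
         \<Longrightarrow> step V E ident X s
               (s\<lparr>fsize := (fsize s)(c := card (members V s c)),
                  stat := (stat s)(c := Wait)\<rparr>)"
| join: "\<lbrakk> is_cand V s c; stat s c = Work; max_neighbor V E ident s c d;
           \<not> real (card (members V s c)) > X * real (fsize s d) \<rbrakk>
         \<Longrightarrow> step V E ident X s
               (s\<lparr>cand := (\<lambda>v. if cand s v = c then d else cand s v)\<rparr>)"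
| to_leader: "\<lbrakk> is_cand V s c; stat s c \<noteq> Leader; \<not> has_external V E s c \<rbrakk>
            \<Longrightarrow> step V E ident X s (s\<lparr>stat := (stat s)(c := Leader)\<rparr>)"

definition init :: "'v config" where
  "init = \<lparr>cand = (\<lambda>v. v), fsize = (\<lambda>_. 1), stat = (\<lambda>_. Wait)\<rparr>"

end

theory Submission
  imports Defs "HOL-Library.Product_Lexorder"
begin

text \<open>Every transition decreases, lexicographically, the triple (number of fragments,
  n^2 minus the total size of the fragments, number of fragments whose state is outdated):
  a join removes a fragment, a growth step that really grows increases the total size, which
  never exceeds n^2, and every other transition corrects the state of one fragment without
  affecting the others.  Hence every run is finite.  In a configuration without transitions no
  fragment has an external edge, since otherwise the fragment of least identity could move:
  all its edges are incoming.  By connectivity a fragment without external edges contains every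
  node, so there is a single fragment, and it must be in state leader.\<close>

lemma id_less_eq_less: "id_less = (<)"
  by (auto simp: fun_eq_iff id_less_def less_prod_def')

lemma inj_on_obtain_strict_min:
  fixes f :: "'a \<Rightarrow> 'b::linorder"
  assumes "finite S" "S \<noteq> {}" "inj_on f S"
  obtains m where "m \<in> S" "\<And>x. x \<in> S \<Longrightarrow> x \<noteq> m \<Longrightarrow> f m < f x"
proof -
  have "Min (f ` S) \<in> f ` S" using assms(1,2) by simp
  then obtain m where m: "m \<in> S" "f m = Min (f ` S)" by (metis imageE)
  have "f m < f x" if "x \<in> S" "x \<noteq> m" for x
    using that m assms by (metis Min_le finite_imageI image_eqI inj_on_eq_iff order_less_le)
  with m(1) show thesis by (rule that)
qed

lemma inj_on_obtain_strict_max: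
  fixes f :: "'a \<Rightarrow> 'b::linorder"
  assumes "finite S" "S \<noteq> {}" "inj_on f S"
  obtains m where "m \<in> S" "\<And>x. x \<in> S \<Longrightarrow> x \<noteq> m \<Longrightarrow> f x < f m"
proof -
  have "Max (f ` S) \<in> f ` S" using assms(1,2) by simp
  then obtain m where m: "m \<in> S" "f m = Max (f ` S)" by (metis imageE)
  have "f x < f m" if "x \<in> S" "x \<noteq> m" for x
    using that m assms by (metis Max_ge finite_imageI image_eqI inj_on_eq_iff order_less_le)
  with m(1) show thesis by (rule that)
qed

lemma no_infinite_chain_if_measure_decreases:
  fixes \<mu> :: "'s \<Rightarrow> 'a::wellorder"
  assumes decreasing: "\<And>s s'. r s s' \<Longrightarrow> I s \<Longrightarrow> I s' \<and> \<mu> s' < \<mu> s" and "I s\<^sub>0"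
  shows "\<nexists>f. f 0 = s\<^sub>0 \<and> (\<forall>i. r (f i) (f (Suc i)))"
proof
  assume "\<exists>f. f 0 = s\<^sub>0 \<and> (\<forall>i. r (f i) (f (Suc i)))"
  then obtain f where f0: "f 0 = s\<^sub>0" and run: "\<And>i. r (f i) (f (Suc i))" by blast
  have I: "I (f i)" for i
    by (induction i) (use f0 \<open>I s\<^sub>0\<close> run decreasing in auto)
  have "((\<mu> \<circ> f) (Suc i), (\<mu> \<circ> f) i) \<in> {(x, y). x < y}" for i
    using decreasing[OF run I] by simp
  then show False
    using wf wf_iff_no_infinite_down_chain by blast
qed

lemma has_external_stat_update [simp]:
  "has_external V E (s\<lparr>stat := st\<rparr>) = has_external V E s"
  by (simp add: fun_eq_iff has_external_def frag_adj_def)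

lemma has_outgoing_stat_update [simp]:
  "has_outgoing V E ident (s\<lparr>stat := st\<rparr>) = has_outgoing V E ident s"
  by (simp add: fun_eq_iff has_outgoing_def frag_adj_def fid_def)

lemma has_external_if_has_outgoing:
  "has_outgoing V E ident s c \<Longrightarrow> has_external V E s c"
  by (auto simp: has_outgoing_def has_external_def)

locale election_network =
  fixes V :: "'v set" and E :: "'v \<Rightarrow> 'v \<Rightarrow> bool" and ident :: "'v \<Rightarrow> nat" and X :: real
  assumes finite_V: "finite V"
    and edges_in_V: "\<And>u v. E u v \<Longrightarrow> u \<in> V \<and> v \<in> V"
    and connected: "\<And>u v. u \<in> V \<Longrightarrow> v \<in> V \<Longrightarrow> E\<^sup>*\<^sup>* u v"
    and ident_inj: "inj_on ident V"
    and X_gt_1: "X > 1"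
begin

lemma inj_on_fid: "inj_on (fid ident s) V"
  using ident_inj by (auto simp: inj_on_def fid_def)

lemma owns_all_if_no_external:
  assumes c: "is_cand V s c" and no_external: "\<not> has_external V E s c" and "v \<in> V"
  shows "cand s v = c"
proof -
  have "E\<^sup>*\<^sup>* c v" using connected c \<open>v \<in> V\<close> by (auto simp: is_cand_def)
  then show ?thesis
  proof (induction rule: rtranclp_induct)
    case base
    then show ?case using c by (simp add: is_cand_def)
  next
    case (step u w)
    then show ?case
      using edges_in_V[OF step(2)] no_external unfolding has_external_def frag_adj_def by metis
  qed
qed

lemma no_external_if_owns_all:
  "(\<And>v. v \<in> V \<Longrightarrow> cand s v = m) \<Longrightarrow> \<not> has_external V E s c"
  by (auto simp: has_external_def frag_adj_def)

lemma finite_members: "finite (members V s c)"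
  using finite_V by (simp add: members_def)

lemma card_members_le: "card (members V s c) \<le> card V"
  using finite_V by (intro card_mono) (auto simp: members_def)

definition valid_config :: "'v config \<Rightarrow> bool" where
  "valid_config s \<longleftrightarrow> (\<forall>v\<in>V. is_cand V s (cand s v))
     \<and> (\<forall>c. is_cand V s c \<longrightarrow> fsize s c \<le> card (members V s c))
     \<and> (\<forall>c. is_cand V s c \<and> stat s c = Leader \<longrightarrow> (\<forall>v\<in>V. cand s v = c))"

lemma valid_config_init: "valid_config init"
proof -
  have "members V init c = {c}" if "c \<in> V" for c
    using that by (auto simp: members_def init_def)
  then show ?thesis by (auto simp: valid_config_def init_def is_cand_def)
qed

lemma is_cand_if_frag_adj:
  "valid_config s \<Longrightarrow> frag_adj V E s c d \<Longrightarrow> is_cand V s d"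
  by (auto simp: valid_config_def frag_adj_def)

lemma valid_config_stat_update:
  assumes valid: "valid_config s" and "st = Leader \<Longrightarrow> \<not> has_external V E s c"
  shows "valid_config (s\<lparr>stat := (stat s)(c := st)\<rparr>)" (is "valid_config ?s'")
proof -
  have same: "members V ?s' = members V s" "is_cand V ?s' = is_cand V s"
    by (simp_all add: fun_eq_iff members_def is_cand_def)
  have "\<forall>v\<in>V. cand s v = x" if "is_cand V s x" "stat ?s' x = Leader" for x
  proof (cases "x = c")
    case True
    then show ?thesis using that assms(2) owns_all_if_no_external by auto
  next
    case False
    then show ?thesis using that valid by (simp add: valid_config_def)
  qed
  then show ?thesis
    using valid unfolding valid_config_def same by simp
qed

lemma valid_config_grow:
  assumes valid: "valid_config s"
  shows "valid_config (s\<lparr>fsize := (fsize s)(c := card (members V s c)),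
                          stat := (stat s)(c := Wait)\<rparr>)"
proof -
  let ?s\<^sub>1 = "s\<lparr>fsize := (fsize s)(c := card (members V s c))\<rparr>"
  have same: "members V ?s\<^sub>1 = members V s" "is_cand V ?s\<^sub>1 = is_cand V s"
    by (simp_all add: fun_eq_iff members_def is_cand_def)
  have "valid_config ?s\<^sub>1"
    using valid unfolding valid_config_def same by simp
  from valid_config_stat_update[OF this, of Wait c] show ?thesis by simp
qed

lemma valid_config_join:
  assumes valid: "valid_config s" and c: "is_cand V s c" and adj: "frag_adj V E s c d"
  shows "valid_config (s\<lparr>cand := (\<lambda>v. if cand s v = c then d else cand s v)\<rparr>)"
    (is "valid_config ?s'")
proof -
  have d: "is_cand V s d" "d \<noteq> c"
    using is_cand_if_frag_adj[OF valid adj] adj by (auto simp: frag_adj_def)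
  have cand_s': "is_cand V ?s' x \<longleftrightarrow> is_cand V s x \<and> x \<noteq> c" for x
    using d by (auto simp: is_cand_def)
  have "card (members V s x) \<le> card (members V ?s' x)" if "x \<noteq> c" for x
    using that by (intro card_mono[OF finite_members]) (auto simp: members_def)
  then have sizes: "\<forall>x. is_cand V ?s' x \<longrightarrow> fsize ?s' x \<le> card (members V ?s' x)"
    using valid unfolding valid_config_def cand_s' by (auto intro: order_trans)
  have "\<forall>v\<in>V. is_cand V ?s' (cand ?s' v)"
    using valid d unfolding valid_config_def cand_s' by auto
  moreover have "\<forall>x. is_cand V ?s' x \<and> stat ?s' x = Leader \<longrightarrow> (\<forall>v\<in>V. cand ?s' v = x)"
    using valid unfolding valid_config_def cand_s' by auto
  ultimately show ?thesis
    using valid sizes by (simp add: valid_config_def)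
qed

lemma step_valid_config:
  assumes "step V E ident X s s'" and valid: "valid_config s"
  shows "valid_config s'"
  using assms(1)
proof cases
  case (join c d)
  then show ?thesis
    using valid_config_join[OF valid] by (simp add: max_neighbor_def)
qed (auto intro: valid valid_config_stat_update valid_config_grow)

lemma reachable_valid_config:
  "(step V E ident X)\<^sup>*\<^sup>* init s \<Longrightarrow> valid_config s"
  by (induction rule: rtranclp_induct) (auto intro: valid_config_init step_valid_config)

lemma leader_owns_all:
  "valid_config s \<Longrightarrow> is_cand V s c \<Longrightarrow> stat s c = Leader \<Longrightarrow> v \<in> V \<Longrightarrow> cand s v = c"
  by (simp add: valid_config_def)

lemma fid_neq_if_frag_adj:
  "valid_config s \<Longrightarrow> is_cand V s c \<Longrightarrow> frag_adj V E s c d \<Longrightarrow> fid ident s c \<noteq> fid ident s d"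
  using inj_on_fid is_cand_if_frag_adj
  by (metis frag_adj_def inj_on_contraD is_cand_def)

definition candidates :: "'v config \<Rightarrow> 'v set" where
  "candidates s = {c. is_cand V s c}"

lemma candidates_subset: "candidates s \<subseteq> V"
  by (auto simp: candidates_def is_cand_def)

lemma finite_candidates: "finite (candidates s)"
  using finite_V candidates_subset by (rule finite_subset[rotated])

definition total_size :: "'v config \<Rightarrow> nat" where
  "total_size s = (\<Sum>c\<in>candidates s. fsize s c)"

text \<open>The state of fragment c is not the one prescribed by rules (1)--(3) for its current edges.\<close>
definition outdated :: "'v config \<Rightarrow> 'v \<Rightarrow> bool" where
  "outdated s c \<longleftrightarrow>
     stat s c = Wait \<and> has_external V E s c \<and> \<not> has_outgoing V E ident s c
   \<or> stat s c = Work \<and> has_outgoing V E ident s c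
   \<or> stat s c \<noteq> Leader \<and> \<not> has_external V E s c"

definition progress :: "'v config \<Rightarrow> nat \<times> nat \<times> nat" where
  "progress s = (card (candidates s), card V * card V - total_size s,
                 card {c \<in> candidates s. outdated s c})"

lemma total_size_le: "valid_config s \<Longrightarrow> total_size s \<le> card V * card V"
proof -
  assume valid: "valid_config s"
  have "fsize s c \<le> card V" if "c \<in> candidates s" for c
    using valid that card_members_le[of s c] by (auto simp: valid_config_def candidates_def)
  then have "total_size s \<le> card (candidates s) * card V"
    unfolding total_size_def using sum_bounded_above[of "candidates s" "fsize s"] by simp
  also have "\<dots> \<le> card V * card V"
    using card_mono[OF finite_V candidates_subset] by simp
  finally show ?thesis .
qed

lemma progress_stat_update:
  assumes c: "is_cand V s c" and "outdated s c"
    and corrected: "\<not> outdated (s\<lparr>stat := (stat s)(c := st)\<rparr>) c"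
  shows "progress (s\<lparr>stat := (stat s)(c := st)\<rparr>) < progress s" (is "progress ?s' < _")
proof -
  have same: "candidates ?s' = candidates s" "total_size ?s' = total_size s"
    by (simp_all add: candidates_def total_size_def is_cand_def)
  have "outdated ?s' x \<longleftrightarrow> outdated s x" if "x \<noteq> c" for x
    using that by (simp add: outdated_def)
  then have "{x \<in> candidates ?s'. outdated ?s' x} = {x \<in> candidates s. outdated s x} - {c}"
    using corrected by (auto simp: same) metis
  also have "card \<dots> < card {x \<in> candidates s. outdated s x}"
    using finite_candidates c \<open>outdated s c\<close>
    by (intro card_Diff1_less) (auto simp: candidates_def)
  finally have "card {x \<in> candidates ?s'. outdated ?s' x} < card {x \<in> candidates s. outdated s x}" .
  then show ?thesis by (simp add: progress_def same)
qed

lemma progress_join: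
  assumes valid: "valid_config s" and c: "is_cand V s c" and adj: "frag_adj V E s c d"
  shows "progress (s\<lparr>cand := (\<lambda>v. if cand s v = c then d else cand s v)\<rparr>) < progress s"
    (is "progress ?s' < _")
proof -
  have "is_cand V s d" "d \<noteq> c"
    using is_cand_if_frag_adj[OF valid adj] adj by (auto simp: frag_adj_def)
  then have "candidates ?s' \<subset> candidates s"
    using c by (auto simp: candidates_def is_cand_def)
  then have "card (candidates ?s') < card (candidates s)"
    using finite_candidates by (rule psubset_card_mono[rotated])
  then show ?thesis by (simp add: progress_def)
qed

lemma has_outgoing_if_outgrows:
  assumes valid: "valid_config s" and c: "is_cand V s c" and adj: "frag_adj V E s c d"
    and outgrows: "real (fsize s c) > X * real (fsize s d)"
  shows "has_outgoing V E ident s c"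
proof (rule ccontr)
  assume "\<not> has_outgoing V E ident s c"
  then have "fid ident s c < fid ident s d"
    using adj fid_neq_if_frag_adj[OF valid c adj]
    by (auto simp: has_outgoing_def id_less_eq_less)
  then have "real (fsize s c) \<le> real (fsize s d)"
    by (auto simp: fid_def less_prod_def')
  also have "\<dots> \<le> X * real (fsize s d)"
    using X_gt_1 mult_right_mono[of 1 X "real (fsize s d)"] by simp
  finally show False using outgrows by simp
qed

lemma progress_grow:
  assumes valid: "valid_config s" and c: "is_cand V s c" and work: "stat s c = Work"
    and adj: "frag_adj V E s c d" and grows: "real (card (members V s c)) > X * real (fsize s d)"
  shows "progress (s\<lparr>fsize := (fsize s)(c := card (members V s c)),
                       stat := (stat s)(c := Wait)\<rparr>) < progress s"
    (is "progress ?s' < _")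
proof (cases "fsize s c = card (members V s c)")
  case True
  then have s': "?s' = s\<lparr>stat := (stat s)(c := Wait)\<rparr>"
    by (cases s) (simp add: fun_upd_idem)
  have "has_outgoing V E ident s c"
    using has_outgoing_if_outgrows[OF valid c adj] grows True by simp
  then show ?thesis
    unfolding s' using c work has_external_if_has_outgoing
    by (intro progress_stat_update) (auto simp: outdated_def)
next
  case False
  then have less: "fsize s c < card (members V s c)"
    using valid c by (simp add: valid_config_def order_less_le)
  have same: "candidates ?s' = candidates s"
    by (simp add: candidates_def is_cand_def)
  have "total_size s < total_size ?s'"
    unfolding total_size_def same
    using finite_candidates c less by (intro sum_strict_mono_ex1) (auto simp: candidates_def)
  moreover have "total_size ?s' \<le> card V * card V"
    using total_size_le valid_config_grow[OF valid] by blast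
  ultimately have "card V * card V - total_size ?s' < card V * card V - total_size s"
    by linarith
  then show ?thesis
    by (simp add: progress_def same)
qed

lemma step_progress:
  assumes "step V E ident X s s'" and valid: "valid_config s"
  shows "progress s' < progress s"
  using assms(1)
proof cases
  case (to_work c)
  then have "\<not> has_outgoing V E ident s c"
    by (auto simp: has_outgoing_def all_incoming_def id_less_eq_less)
  with to_work show ?thesis
    unfolding to_work(1) by (intro progress_stat_update) (auto simp: outdated_def)
next
  case (to_wait c)
  then show ?thesis
    unfolding to_wait(1) using has_external_if_has_outgoing
    by (intro progress_stat_update) (auto simp: outdated_def)
next
  case (grow c d)
  then show ?thesis
    using progress_grow[OF valid grow(2,3) _ grow(5)] by (simp add: max_neighbor_def)
next
  case (join c d)
  then show ?thesis
    using progress_join[OF valid] by (simp add: max_neighbor_def)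
next
  case (to_leader c)
  then show ?thesis
    unfolding to_leader(1) by (intro progress_stat_update) (auto simp: outdated_def)
qed

theorem no_infinite_run: "\<nexists>f. f 0 = init \<and> (\<forall>i. step V E ident X (f i) (f (Suc i)))"
  using step_valid_config step_progress valid_config_init
  by (intro no_infinite_chain_if_measure_decreases[where I = valid_config and \<mu> = progress]) auto

lemma obtain_max_neighbor:
  assumes valid: "valid_config s" and "has_external V E s c"
  obtains d where "max_neighbor V E ident s c d"
proof -
  let ?N = "{d. frag_adj V E s c d}"
  have "?N \<subseteq> V"
    using is_cand_if_frag_adj[OF valid] by (auto simp: is_cand_def)
  then have "finite ?N" and "inj_on (fid ident s) ?N"
    using finite_subset finite_V inj_on_subset[OF inj_on_fid] by auto
  moreover have "?N \<noteq> {}"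
    using \<open>has_external V E s c\<close> by (simp add: has_external_def)
  ultimately obtain d where "d \<in> ?N" "\<And>d'. d' \<in> ?N \<Longrightarrow> d' \<noteq> d \<Longrightarrow> fid ident s d' < fid ident s d"
    using inj_on_obtain_strict_max by blast
  then show thesis
    by (intro that) (auto simp: max_neighbor_def id_less_eq_less)
qed

lemma working_fragment_can_step:
  assumes valid: "valid_config s" and c: "is_cand V s c" and work: "stat s c = Work"
    and external: "has_external V E s c"
  shows "\<exists>s'. step V E ident X s s'"
proof -
  obtain d where d: "max_neighbor V E ident s c d"
    using obtain_max_neighbor[OF valid external] .
  show ?thesis
  proof (cases "real (card (members V s c)) > X * real (fsize s d)")
    case True
    then show ?thesis using step.grow[OF c work d] by blast
  next
    case False
    then show ?thesis using step.join[OF c work d] by blast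
  qed
qed

lemma terminal_no_external:
  assumes valid: "valid_config s" and terminal: "\<And>s'. \<not> step V E ident X s s'"
    and c: "is_cand V s c"
  shows "\<not> has_external V E s c"
proof
  assume external: "has_external V E s c"
  have "candidates s \<noteq> {}"
    using c by (auto simp: candidates_def)
  then obtain m where m: "m \<in> candidates s"
    and least: "\<And>d. d \<in> candidates s \<Longrightarrow> d \<noteq> m \<Longrightarrow> fid ident s m < fid ident s d"
    using inj_on_obtain_strict_min[OF finite_candidates _ inj_on_subset[OF inj_on_fid candidates_subset]]
    by blast
  have m_cand: "is_cand V s m"
    using m by (simp add: candidates_def)
  have m_external: "has_external V E s m"
    using owns_all_if_no_external[OF m_cand] no_external_if_owns_all external by blast
  have "all_incoming V E ident s m"
    unfolding all_incoming_def id_less_eq_less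
  proof (intro allI impI)
    fix d assume adj: "frag_adj V E s m d"
    have "d \<in> candidates s"
      using is_cand_if_frag_adj[OF valid adj] by (simp add: candidates_def)
    moreover have "d \<noteq> m"
      using adj by (auto simp: frag_adj_def)
    ultimately show "fid ident s m < fid ident s d" by (rule least)
  qed
  show False
  proof (cases "stat s m")
    case Wait
    then show False
      using step.to_work[OF m_cand Wait m_external \<open>all_incoming V E ident s m\<close>] terminal by blast
  next
    case Work
    then show False
      using working_fragment_can_step[OF valid m_cand Work m_external] terminal by blast
  next
    case Leader
    then show False
      using m_external leader_owns_all[OF valid m_cand] no_external_if_owns_all by blast
  qed
qed

lemma terminal_unique_leader:
  assumes valid: "valid_config s" and terminal: "\<And>s'. \<not> step V E ident X s s'"
    and "V \<noteq> {}"
  shows "\<exists>!c. is_cand V s c \<and> stat s c = Leader"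
proof -
  obtain v where "v \<in> V" using \<open>V \<noteq> {}\<close> by blast
  then have c: "is_cand V s (cand s v)"
    using valid by (simp add: valid_config_def)
  then have no_external: "\<not> has_external V E s (cand s v)"
    using terminal_no_external[OF valid terminal] by blast
  have "stat s (cand s v) = Leader"
    using step.to_leader[OF c _ no_external] terminal by blast
  moreover have "c' = cand s v" if "is_cand V s c'" for c'
    using that owns_all_if_no_external[OF c no_external] by (metis is_cand_def)
  ultimately show ?thesis
    using c by blast
qed

end

theorem theorem2:
  fixes V :: "'v set" and E :: "'v \<Rightarrow> 'v \<Rightarrow> bool" and ident :: "'v \<Rightarrow> nat"
    and X :: real
  assumes finV: "finite V" and nonempty: "V \<noteq> {}"
    and sym: "\<And>u v. E u v \<Longrightarrow> E v u"
    and irrefl: "\<And>v. \<not> E v v"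
    and inV: "\<And>u v. E u v \<Longrightarrow> u \<in> V \<and> v \<in> V"
    and connected: "\<And>u v. u \<in> V \<Longrightarrow> v \<in> V \<Longrightarrow> E\<^sup>*\<^sup>* u v"
    and ident_inj: "inj_on ident V"
    and X_gt: "X > 1"
  shows "(\<nexists>f. f 0 = init \<and> (\<forall>i. step V E ident X (f i) (f (Suc i))))
       \<and> (\<forall>s. (step V E ident X)\<^sup>*\<^sup>* init s \<and> (\<nexists>s'. step V E ident X s s') \<longrightarrow>
            (\<exists>!c. is_cand V s c \<and> stat s c = Leader)
            \<and> (\<forall>c. is_cand V s c \<and> stat s c = Leader \<longrightarrow> (\<forall>v\<in>V. cand s v = c)))"
proof -
  interpret election_network V E ident X
    using finV inV connected ident_inj X_gt by unfold_locales
  have "(\<exists>!c. is_cand V s c \<and> stat s c = Leader)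
      \<and> (\<forall>c. is_cand V s c \<and> stat s c = Leader \<longrightarrow> (\<forall>v\<in>V. cand s v = c))"
    if "(step V E ident X)\<^sup>*\<^sup>* init s" and terminal: "\<nexists>s'. step V E ident X s s'" for s
  proof -
    have valid: "valid_config s"
      using reachable_valid_config[OF that(1)] .
    show ?thesis
      using terminal_unique_leader[OF valid _ nonempty] terminal leader_owns_all[OF valid] by blast
  qed
  then show ?thesis
    using no_infinite_run by blast
qed

end
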